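(* Let $\varkappa>0$ and $\beta\le 0$ be constants, let $g:\mathbb{R}\to\mathbb{R}$ be a sufficiently smooth function, and let $V_p(\xi_2)=-\left(\xi_2^2-\tfrac14\right)$. For $x_1\in\mathbb{R}$, $\xi_2\in\left[-\tfrac12,\tfrac12\right]$ and a function $f$ write $\langle f\rangle(x_1)=\int_{-1/2}^{1/2} f(x_1,\xi_2)\,d\xi_2$. Consider sequences of sufficiently smooth functions $\overline{c}_j(x_1)$ and $\widetilde{c}_j(x_1,\xi_2)$, $j=0,1,2,\dots$, with $c_j=\overline{c}_j+\widetilde{c}_j$, constructed as follows: $\widetilde{c}_0=\widetilde{c}_1=0$; for every $j\ge 0$, $\overline{c}_j$ solves $$-\varkappa\frac{\partial^2\overline{c}_j}{\partial x_1^2}+\langle V_p\rangle\frac{\partial\overline{c}_j}{\partial x_1}+\Big\langle V_p\frac{\partial\widetilde{c}_j}{\partial x_1}\Big\rangle+g(x_1)\,\delta_{j0}=2\beta\,\overline{c}_j+\beta\Big(\widetilde{c}_j\big(x_1,\tfrac12\big)+\widetilde{c}_j\big(x_1,-\tfrac12\big)\Big);$$ and for every $j\ge 2$, for each $x_1$, $\widetilde{c}_j(x_1,\cdot)$ is the solution of $$\varkappa\frac{\partial^2\widetilde{c}_j}{\partial\xi_2^2}=-\varkappa\frac{\partial^2 c_{j-2}}{\partial x_1^2}+V_p(\xi_2)\frac{\partial c_{j-2}}{\partial x_1}+g(x_1)\,\delta_{j2},\quad \xi_2\in\left(-\tfrac12,\tfrac12\right),$$ $$\pm\varkappa\frac{\partial\widetilde{c}_j}{\partial\xi_2}\Big|_{\xi_2=\pm\frac12}=\beta\,c_{j-2}\big(x_1,\pm\tfrac12\big),\qquad\langle\widetilde{c}_j\rangle=0.$$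 Then for every $j\ge0$, $\widetilde{c}_j(x_1,\xi_2)$ is, for each fixed $x_1$, a polynomial in $\xi_2$ of degree at most $2j$ (with coefficients depending on $x_1$).
   Context: This is the recursive construction of the terms of the asymptotic expansion $c^{(k)}_{\varepsilon r}(x_1,\xi_2)=\sum_{j=0}^k\varepsilon^j c_j(x_1,\xi_2)$, $\xi_2=x_2/\varepsilon$, for the convection–diffusion equation $-\operatorname{div}(\varkappa\nabla c)+V_p(x_2/\varepsilon)\,\partial c/\partial x_1=g(x_1)$ in the thin channel $\mathbb{R}\times(-\varepsilon/2,\varepsilon/2)$ with Robin condition $\varkappa\,\partial c/\partial n=\varepsilon\beta c$ on $x_2=\pm\varepsilon/2$. Here $\delta_{jm}$ is the Kronecker delta. The equation for $\overline{c}_j$ is the solvability (compatibility) condition ensuring the Neumann problem for $\widetilde{c}_{j+2}$ has a solution. *)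

theory Defs
  imports "HOL-Analysis.Analysis" "HOL-Computational_Algebra.Polynomial"
begin

definition Vp :: "real \<Rightarrow> real" where
  "Vp xi = - (xi^2 - 1/4)"

definition avg :: "(real \<Rightarrow> real) \<Rightarrow> real" where
  "avg f = integral {-1/2..1/2} f"

definition dx1 :: "(real \<Rightarrow> real \<Rightarrow> real) \<Rightarrow> real \<Rightarrow> real \<Rightarrow> real" where
  "dx1 f x xi = deriv (\<lambda>t. f t xi) x"

definition dxi :: "(real \<Rightarrow> real \<Rightarrow> real) \<Rightarrow> real \<Rightarrow> real \<Rightarrow> real" where
  "dxi f x xi = deriv (\<lambda>s. f x s) xi"

text \<open>Twice differentiable everywhere (the "sufficiently smooth" hypothesis).\<close>
definition twice_diff :: "(real \<Rightarrow> real) \<Rightarrow> bool" where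
  "twice_diff f \<longleftrightarrow> (\<forall>x. f differentiable (at x)) \<and> (\<forall>x. deriv f differentiable (at x))"

end

theory Submission
  imports Defs
begin

text \<open>
  The cell equation gives \<open>\<partial>\<^sup>2ctil j/\<partial>\<xi>\<^sub>2\<^sup>2\<close> as a
  combination of \<open>x\<^sub>1\<close>-derivatives of \<open>c (j - 2)\<close>, a polynomial of degree \<open>2 j - 4\<close> in
  \<open>\<xi>\<^sub>2\<close> by induction, and of the quadratic profile \<open>Vp\<close>; two integrations in \<open>\<xi>\<^sub>2\<close> then
  give degree \<open>2 j\<close>. The subtle point is that differentiating in \<open>x\<^sub>1\<close> keeps the degree
  bound: on \<open>n + 1\<close> fixed nodes the Lagrange basis writes a polynomial of degree \<open>n\<close> as a
  linear combination of its nodal values, and these are differentiable in \<open>x\<^sub>1\<close>.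
  The boundary conditions, the mean-zero normalisation and the equations for \<open>cbar j\<close> only
  fix integration constants.
\<close>

definition poly_on :: "'a::comm_semiring_0 set \<Rightarrow> nat \<Rightarrow> ('a \<Rightarrow> 'a) \<Rightarrow> bool" where
  "poly_on A n f \<longleftrightarrow> (\<exists>p. degree p \<le> n \<and> (\<forall>x\<in>A. f x = poly p x))"

lemma poly_onI: "degree p \<le> n \<Longrightarrow> (\<And>x. x \<in> A \<Longrightarrow> f x = poly p x) \<Longrightarrow> poly_on A n f"
  unfolding poly_on_def by blast

lemma poly_on_cong: "(\<And>x. x \<in> A \<Longrightarrow> f x = g x) \<Longrightarrow> poly_on A n f \<longleftrightarrow> poly_on A n g"
  unfolding poly_on_def by auto

lemma poly_on_mono: "poly_on A n f \<Longrightarrow> B \<subseteq> A \<Longrightarrow> n \<le> m \<Longrightarrow> poly_on B m f"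
  unfolding poly_on_def by (meson order.trans subsetD)

lemma poly_on_const: "poly_on A n (\<lambda>_. c)"
  by (rule poly_onI[of "[:c:]"]) auto

lemma poly_on_add: "poly_on A n f \<Longrightarrow> poly_on A n g \<Longrightarrow> poly_on A n (\<lambda>x. f x + g x)"
  unfolding poly_on_def by (metis degree_add_le poly_add)

lemma poly_on_cmult: "poly_on A n f \<Longrightarrow> poly_on A n (\<lambda>x. c * f x)"
  unfolding poly_on_def by (metis degree_smult_le order.trans poly_smult)

lemma poly_on_mult: "poly_on A n f \<Longrightarrow> poly_on A m g \<Longrightarrow> poly_on A (n + m) (\<lambda>x. f x * g x)"
  unfolding poly_on_def by (metis add_mono degree_mult_le order.trans poly_mult)

definition lagrange_basis :: "(nat \<Rightarrow> 'a::field) \<Rightarrow> nat \<Rightarrow> nat \<Rightarrow> 'a poly" where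
  "lagrange_basis z n k =
     smult (1 / (\<Prod>m\<in>{..n} - {k}. z k - z m)) (\<Prod>m\<in>{..n} - {k}. [:- z m, 1:])"

lemma degree_lagrange_basis_le:
  assumes "k \<le> n"
  shows "degree (lagrange_basis z n k) \<le> n"
proof -
  have "degree (\<Prod>m\<in>{..n} - {k}. [:- z m, 1:]) \<le> (\<Sum>m\<in>{..n} - {k}. degree [:- z m, 1:])"
    using degree_prod_sum_le[of "{..n} - {k}" "\<lambda>m. [:- z m, 1:]"] by simp
  also have "\<dots> \<le> n"
    using assms by (simp add: card_Diff_singleton)
  finally show ?thesis
    unfolding lagrange_basis_def by (rule order.trans[OF degree_smult_le])
qed

lemma poly_lagrange_basis:
  assumes "inj_on z {..n}" "k \<le> n" "m \<le> n"
  shows "poly (lagrange_basis z n k) (z m) = (if m = k then 1 else 0)"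
proof (cases "m = k")
  case True
  have "(\<Prod>i\<in>{..n} - {k}. z k - z i) \<noteq> 0"
    using assms by (auto simp: inj_on_def)
  with True show ?thesis
    by (simp add: lagrange_basis_def poly_prod)
next
  case False
  then have "(\<Prod>i\<in>{..n} - {k}. poly [:- z i, 1:] (z m)) = 0"
    using assms by (intro prod_zero) auto
  with False show ?thesis
    by (simp add: lagrange_basis_def poly_prod)
qed

lemma lagrange_interpolation:
  assumes inj: "inj_on z {..n}" and "degree p \<le> n"
  shows "poly p x = (\<Sum>k\<le>n. poly p (z k) * poly (lagrange_basis z n k) x)"
proof -
  define q where "q = (\<Sum>k\<le>n. smult (poly p (z k)) (lagrange_basis z n k))"
  have "degree q \<le> n"
    unfolding q_def
    by (intro degree_sum_le) (auto intro: order.trans[OF degree_smult_le] degree_lagrange_basis_le)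
  moreover have "poly p y = poly q y" if "y \<in> z ` {..n}" for y
  proof -
    from that obtain m where m: "m \<le> n" "y = z m" by auto
    have "poly q y = (\<Sum>k\<le>n. if k = m then poly p (z m) else 0)"
      unfolding q_def poly_sum using m poly_lagrange_basis[OF inj]
      by (intro sum.cong) auto
    with m show ?thesis by simp
  qed
  moreover have "card (z ` {..n}) = Suc n"
    using card_image[OF inj] by simp
  ultimately have "p = q"
    using assms(2) by (intro poly_eqI_degree[of "z ` {..n}"]) auto
  then have "poly p x = poly q x"
    by simp
  then show ?thesis
    by (simp add: q_def poly_sum mult.commute)
qed

lemma poly_on_dx1:
  fixes F :: "real \<Rightarrow> real \<Rightarrow> real"
  assumes "infinite I"
    and poly: "\<And>t. poly_on I n (F t)"
    and diff: "\<And>x t. x \<in> I \<Longrightarrow> (\<lambda>t. F t x) differentiable (at t)"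
  shows "poly_on I n (dx1 F t)"
proof -
  obtain z :: "nat \<Rightarrow> real" where "inj z" and zI: "range z \<subseteq> I"
    using infinite_countable_subset[OF \<open>infinite I\<close>] by blast
  then have inj: "inj_on z {..n}"
    using inj_on_subset by blast
  define L where "L = lagrange_basis z n"
  have expand: "F s x = (\<Sum>k\<le>n. F s (z k) * poly (L k) x)" if "x \<in> I" for s x
  proof -
    obtain p where p: "degree p \<le> n" "\<forall>y\<in>I. F s y = poly p y"
      using poly[of s] unfolding poly_on_def by blast
    have "F s x = poly p x"
      using p(2) that by blast
    also have "\<dots> = (\<Sum>k\<le>n. poly p (z k) * poly (L k) x)"
      unfolding L_def by (rule lagrange_interpolation[OF inj p(1)])
    also have "\<dots> = (\<Sum>k\<le>n. F s (z k) * poly (L k) x)"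
      using p(2) zI by (intro sum.cong) (auto simp: image_subset_iff)
    finally show ?thesis .
  qed
  show ?thesis
  proof (rule poly_onI)
    show "degree (\<Sum>k\<le>n. smult (dx1 F t (z k)) (L k)) \<le> n"
      unfolding L_def
      by (intro degree_sum_le) (auto intro: order.trans[OF degree_smult_le] degree_lagrange_basis_le)
    fix x assume "x \<in> I"
    have "((\<lambda>s. \<Sum>k\<le>n. F s (z k) * poly (L k) x) has_real_derivative
            (\<Sum>k\<le>n. dx1 F t (z k) * poly (L k) x)) (at t)"
      using diff zI unfolding dx1_def
      by (intro DERIV_sum DERIV_cmult_right) (auto simp: DERIV_deriv_iff_real_differentiable image_subset_iff)
    then have "dx1 F t x = (\<Sum>k\<le>n. dx1 F t (z k) * poly (L k) x)"
      unfolding dx1_def expand[OF \<open>x \<in> I\<close>] by (rule DERIV_imp_deriv)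
    then show "dx1 F t x = poly (\<Sum>k\<le>n. smult (dx1 F t (z k)) (L k)) x"
      by (simp add: poly_sum)
  qed
qed

lemma pderiv_sum: "pderiv (sum f A) = (\<Sum>x\<in>A. pderiv (f x))"
  using higher_pderiv_sum[where n = 1] by simp

lemma exists_pderiv_eq:
  fixes q :: "'a::field_char_0 poly"
  shows "\<exists>p. pderiv p = q \<and> degree p \<le> degree q + 1"
proof -
  define p where "p = (\<Sum>i\<le>degree q. monom (coeff q i / of_nat (Suc i)) (Suc i))"
  have "pderiv p = (\<Sum>i\<le>degree q. monom (coeff q i) i)"
    unfolding p_def pderiv_sum pderiv_monom
    by (intro sum.cong) (auto simp del: of_nat_Suc)
  also have "\<dots> = q"
    by (rule poly_as_sum_of_monoms)
  finally have "pderiv p = q" .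
  moreover have "degree p \<le> degree q + 1"
    unfolding p_def by (rule degree_sum_le) (auto intro: order.trans[OF degree_monom_le])
  ultimately show ?thesis by blast
qed

lemma poly_on_antiderivative:
  fixes f f' :: "real \<Rightarrow> real"
  assumes "a < b" and cont: "continuous_on {a..b} f"
    and deriv: "\<And>x. x \<in> {a<..<b} \<Longrightarrow> (f has_real_derivative f' x) (at x)"
    and poly: "poly_on {a<..<b} n f'"
  shows "poly_on {a..b} (n + 1) f"
proof -
  obtain q where q: "degree q \<le> n" "\<forall>x\<in>{a<..<b}. f' x = poly q x"
    using poly unfolding poly_on_def by blast
  obtain p where p: "pderiv p = q" "degree p \<le> degree q + 1"
    using exists_pderiv_eq by blast
  define h where "h x = f x - poly p x" for x
  have "continuous_on {a..b} h"
    unfolding h_def by (intro continuous_intros cont)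
  moreover have "(h has_real_derivative 0) (at x)" if "a < x" "x < b" for x
    using deriv[of x] poly_DERIV[of p x] q(2) p(1) that unfolding h_def
    by (auto intro!: derivative_eq_intros)
  ultimately have "h x = h a" if "x \<in> {a..b}" for x
    using that \<open>a < b\<close> by (intro DERIV_isconst2) auto
  then have "f x = poly (p + [:h a:]) x" if "x \<in> {a..b}" for x
    using that unfolding h_def by (simp add: algebra_simps)
  moreover have "degree (p + [:h a:]) \<le> n + 1"
    using p(2) q(1) by (intro degree_add_le) auto
  ultimately show ?thesis
    by (intro poly_onI)
qed

lemma poly_on_second_antiderivative:
  assumes "a < b" and "twice_diff f"
    and "poly_on {a<..<b} n (deriv (deriv f))"
  shows "poly_on {a..b} (n + 2) f"
proof -
  have f': "(f has_real_derivative deriv f x) (at x)"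
    and f'': "(deriv f has_real_derivative deriv (deriv f) x) (at x)" for x
    using \<open>twice_diff f\<close> unfolding twice_diff_def
    by (simp_all add: DERIV_deriv_iff_real_differentiable)
  have "continuous_on {a..b} f" "continuous_on {a..b} (deriv f)"
    using f' f'' by (meson DERIV_isCont continuous_at_imp_continuous_on)+
  have "poly_on {a..b} (n + 1) (deriv f)"
    using \<open>a < b\<close> \<open>continuous_on {a..b} (deriv f)\<close> f'' assms(3)
    by (intro poly_on_antiderivative)
  then have "poly_on {a<..<b} (n + 1) (deriv f)"
    by (rule poly_on_mono) auto
  then have "poly_on {a..b} (n + 1 + 1) f"
    using \<open>a < b\<close> \<open>continuous_on {a..b} f\<close> f' by (intro poly_on_antiderivative)
  then show ?thesis
    by simp
qed

lemma twice_diff_add: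
  assumes f: "twice_diff f" and g: "twice_diff g"
  shows "twice_diff (\<lambda>t. f t + g t)"
proof -
  have "deriv (\<lambda>t. f t + g t) = (\<lambda>t. deriv f t + deriv g t)"
    using f g unfolding twice_diff_def
    by (intro ext deriv_add) (auto simp: field_differentiable_def real_differentiable_def)
  with f g show ?thesis
    unfolding twice_diff_def by (auto intro: differentiable_add)
qed

lemma poly_on_Vp: "poly_on A 2 Vp"
  by (rule poly_onI[of "[:1/4, 0, -1:]"]) (auto simp: Vp_def algebra_simps power2_eq_square)

lemma poly_on_cell_problem:
  fixes u v :: "real \<Rightarrow> real \<Rightarrow> real"
  assumes "a < b" and "kappa \<noteq> 0"
    and poly_v: "\<And>t. poly_on {a..b} n (v t)"
    and smooth_v: "\<And>xi. twice_diff (\<lambda>t. v t xi)"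
    and smooth_u: "twice_diff (u x1)"
    and cell: "\<And>xi. xi \<in> {a<..<b} \<Longrightarrow>
      kappa * dxi (dxi u) x1 xi = - kappa * dx1 (dx1 v) x1 xi + Vp xi * dx1 v x1 xi + r"
  shows "poly_on {a..b} (n + 4) (u x1)"
proof -
  have "(\<lambda>t. v t xi) differentiable at t" "(\<lambda>t. dx1 v t xi) differentiable at t" for t xi
    using smooth_v unfolding twice_diff_def dx1_def by auto
  then have dv: "poly_on {a..b} n (dx1 v x1)" and ddv: "poly_on {a..b} n (dx1 (dx1 v) x1)"
    using \<open>a < b\<close> by (intro poly_on_dx1 poly_v; simp)+
  let ?rhs = "\<lambda>xi. - kappa * dx1 (dx1 v) x1 xi + Vp xi * dx1 v x1 xi + r"
  have "poly_on {a..b} (n + 2) (dx1 (dx1 v) x1)"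
    by (rule poly_on_mono[OF ddv]) auto
  moreover have "poly_on {a..b} (n + 2) (\<lambda>xi. Vp xi * dx1 v x1 xi)"
    using poly_on_mult[OF poly_on_Vp dv] by (simp add: add.commute)
  ultimately have "poly_on {a..b} (n + 2) (\<lambda>xi. (1 / kappa) * ?rhs xi)"
    by (intro poly_on_cmult poly_on_add poly_on_const)
  moreover have "deriv (deriv (u x1)) xi = (1 / kappa) * ?rhs xi" if "xi \<in> {a<..<b}" for xi
    using cell[OF that] \<open>kappa \<noteq> 0\<close> by (simp add: dxi_def field_simps)
  ultimately have "poly_on {a<..<b} (n + 2) (deriv (deriv (u x1)))"
    by (subst poly_on_cong) (auto elim: poly_on_mono)
  then have "poly_on {a..b} (n + 2 + 2) (u x1)"
    using \<open>a < b\<close> smooth_u by (intro poly_on_second_antiderivative)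
  then show ?thesis
    by (metis add.assoc numeral_Bit0)
qed

theorem lemma1:
  fixes kappa beta :: real
    and g :: "real \<Rightarrow> real"
    and cbar :: "nat \<Rightarrow> real \<Rightarrow> real"
    and ctil :: "nat \<Rightarrow> real \<Rightarrow> real \<Rightarrow> real"
    and c :: "nat \<Rightarrow> real \<Rightarrow> real \<Rightarrow> real"
  assumes kappa_pos: "kappa > 0"
    and beta_nonpos: "beta \<le> 0"
    and c_def: "\<And>j x1 xi. c j x1 xi = cbar j x1 + ctil j x1 xi"
    and smooth_cbar: "\<And>j. twice_diff (cbar j)"
    and smooth_ctil_x1: "\<And>j xi. twice_diff (\<lambda>t. ctil j t xi)"
    and smooth_ctil_xi: "\<And>j x1. twice_diff (\<lambda>s. ctil j x1 s)"
    and ctil0: "\<And>x1 xi. ctil 0 x1 xi = 0"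
    and ctil1: "\<And>x1 xi. ctil 1 x1 xi = 0"
    and eq_cbar: "\<And>j x1.
        - kappa * deriv (deriv (cbar j)) x1 + avg Vp * deriv (cbar j) x1
        + avg (\<lambda>xi. Vp xi * dx1 (ctil j) x1 xi) + (if j = 0 then g x1 else 0)
        = 2 * beta * cbar j x1 + beta * (ctil j x1 (1/2) + ctil j x1 (-1/2))"
    and eq_ctil: "\<And>j x1 xi. j \<ge> 2 \<Longrightarrow> xi \<in> {-1/2<..<1/2} \<Longrightarrow>
        kappa * dxi (dxi (ctil j)) x1 xi
        = - kappa * dx1 (dx1 (c (j - 2))) x1 xi + Vp xi * dx1 (c (j - 2)) x1 xi
          + (if j = 2 then g x1 else 0)"
    and bc_plus: "\<And>j x1. j \<ge> 2 \<Longrightarrow>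
        kappa * dxi (ctil j) x1 (1/2) = beta * c (j - 2) x1 (1/2)"
    and bc_minus: "\<And>j x1. j \<ge> 2 \<Longrightarrow>
        - kappa * dxi (ctil j) x1 (-1/2) = beta * c (j - 2) x1 (-1/2)"
    and mean_zero: "\<And>j x1. j \<ge> 2 \<Longrightarrow> avg (\<lambda>xi. ctil j x1 xi) = 0"
  shows "\<forall>j x1. \<exists>p :: real poly. degree p \<le> 2 * j \<and>
           (\<forall>xi \<in> {-1/2..1/2}. ctil j x1 xi = poly p xi)"
proof -
  have "poly_on {-1/2..1/2} (2 * j) (ctil j x1)" for j x1
  proof (induction j arbitrary: x1 rule: less_induct)
    case (less j)
    show ?case
    proof (cases "j < 2")
      case True
      then have "ctil j x1 = (\<lambda>_. 0)"
        using ctil0 ctil1 by (auto simp: less_Suc_eq numeral_2_eq_2)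
      then show ?thesis
        by (simp add: poly_on_const)
    next
      case False
      define i where "i = j - 2"
      have j: "j = i + 2" "i < j" "j - 2 = i"
        using False by (auto simp: i_def)
      have "poly_on {-1/2..1/2} (2 * i) (c i t)" for t
        using poly_on_add[OF poly_on_const less.IH[OF j(2)]] by (simp add: c_def[abs_def])
      moreover have "twice_diff (\<lambda>t. c i t xi)" for xi
        unfolding c_def by (intro twice_diff_add smooth_cbar smooth_ctil_x1)
      ultimately have "poly_on {-1/2..1/2} (2 * i + 4) (ctil j x1)"
        using eq_ctil[of j] kappa_pos smooth_ctil_xi
        by (intro poly_on_cell_problem[where kappa = kappa and u = "ctil j" and v = "c i"
                                          and r = "if j = 2 then g x1 else 0"])
           (simp_all add: j)
      moreover have "2 * j = 2 * i + 4"
        using j(1) by simp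
      ultimately show ?thesis
        by simp
    qed
  qed
  then show ?thesis
    unfolding poly_on_def by blast
qed

end
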